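(* Let $X$, $Y$ be disjoint sets of cardinality at least two, $M\le\mathrm{Sym}(X)$ and $N\le\mathrm{Sym}(Y)$ nontrivial permutation groups, $T$ the $(|X|,|Y|)$-biregular tree and $c$ a legal colouring of $X$ and $Y$. For each vertex $v$ write $c(\overline{A}(v))$ for the unique colour of the arcs terminating at $v$. Then two vertices $v,v'\in V_X$ lie in the same orbit of $U_c(M,N)$ if and only if $c(\overline{A}(v))$ and $c(\overline{A}(v'))$ lie in the same orbit of $N$; and two vertices $v,v'\in V_Y$ lie in the same orbit of $U_c(M,N)$ if and only if $c(\overline{A}(v))$ and $c(\overline{A}(v'))$ lie in the same orbit of $M$.
   Context: $T$ has natural bipartition $VT=V_X\sqcup V_Y$ (vertices in $V_X$ have valency $|X|$, in $V_Y$ valency $|Y|$). $A(v)$, $\overline{A}(v)$ are the sets of arcs (ordered pairs of adjacent vertices) with origin, resp. terminus, $v$. A legal colouring is a map $c:AT\to X\cup Y$ restricting to a bijection $A(v)\to X$ for $v\in V_X$, to a bijection $A(v)\to Y$ for $v\in V_Y$, and constant on each $\overline{A}(v)$. $U_c(M,N)$ is the group of $g\in\mathrm{Aut}(T)$ with $gV_X=V_X$ and $c|_{A(gv)}\circ g|_{A(v)}\circ(c|_{A(v)})^{-1}$ in $M$ for $v\in V_X$ and in $N$ for $v\in V_Y$. *)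

theory Defs
  imports "HOL-Algebra.Bij"
begin

text \<open>Graphs are given by an adjacency relation on a vertex type; the vertex set is UNIV.
Arcs are ordered pairs of adjacent vertices.\<close>

definition is_cycle :: "('v \<Rightarrow> 'v \<Rightarrow> bool) \<Rightarrow> 'v list \<Rightarrow> bool" where
  "is_cycle adj xs \<longleftrightarrow> length xs \<ge> 3 \<and> distinct xs \<and>
     (\<forall>i < length xs. adj (xs ! i) (xs ! ((i + 1) mod length xs)))"

definition is_tree :: "('v \<Rightarrow> 'v \<Rightarrow> bool) \<Rightarrow> bool" where
  "is_tree adj \<longleftrightarrow> (\<forall>u w. adj u w \<longrightarrow> adj w u) \<and> (\<forall>u. \<not> adj u u) \<and>
     (\<forall>u w. adj\<^sup>*\<^sup>* u w) \<and> \<not> (\<exists>xs. is_cycle adj xs)"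

definition arcs_out :: "('v \<Rightarrow> 'v \<Rightarrow> bool) \<Rightarrow> 'v \<Rightarrow> ('v \<times> 'v) set" where
  "arcs_out adj v = {(v, w) | w. adj v w}"

definition arcs_in :: "('v \<Rightarrow> 'v \<Rightarrow> bool) \<Rightarrow> 'v \<Rightarrow> ('v \<times> 'v) set" where
  "arcs_in adj v = {(w, v) | w. adj w v}"

text \<open>Biregular tree with natural bipartition VX, VY (VX-vertices adjacent only to VY-vertices);
the valencies are forced by the legal colouring.\<close>
definition biregular_tree_bip :: "('v \<Rightarrow> 'v \<Rightarrow> bool) \<Rightarrow> 'v set \<Rightarrow> 'v set \<Rightarrow> bool" where
  "biregular_tree_bip adj VX VY \<longleftrightarrow> is_tree adj \<and> VX \<inter> VY = {} \<and> VX \<union> VY = UNIV \<and>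
     (\<forall>u w. adj u w \<longrightarrow> (u \<in> VX \<longleftrightarrow> w \<in> VY))"

definition legal_colouring ::
  "('v \<Rightarrow> 'v \<Rightarrow> bool) \<Rightarrow> 'v set \<Rightarrow> 'v set \<Rightarrow> 'c set \<Rightarrow> 'c set \<Rightarrow> ('v \<times> 'v \<Rightarrow> 'c) \<Rightarrow> bool" where
  "legal_colouring adj VX VY X Y c \<longleftrightarrow>
     (\<forall>v\<in>VX. bij_betw c (arcs_out adj v) X) \<and>
     (\<forall>v\<in>VY. bij_betw c (arcs_out adj v) Y) \<and>
     (\<forall>v. \<forall>a\<in>arcs_in adj v. \<forall>b\<in>arcs_in adj v. c a = c b)"

definition is_aut :: "('v \<Rightarrow> 'v \<Rightarrow> bool) \<Rightarrow> ('v \<Rightarrow> 'v) \<Rightarrow> bool" where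
  "is_aut adj g \<longleftrightarrow> bij g \<and> (\<forall>u w. adj u w \<longleftrightarrow> adj (g u) (g w))"

text \<open>The local action c|A(gv) o g|A(v) o (c|A(v))^-1, as an extensional map on the colour set S.\<close>
definition local_action ::
  "('v \<Rightarrow> 'v \<Rightarrow> bool) \<Rightarrow> ('v \<times> 'v \<Rightarrow> 'c) \<Rightarrow> 'c set \<Rightarrow> ('v \<Rightarrow> 'v) \<Rightarrow> 'v \<Rightarrow> 'c \<Rightarrow> 'c" where
  "local_action adj c S g v = (\<lambda>x\<in>S. (let a = inv_into (arcs_out adj v) c x in c (g (fst a), g (snd a))))"

definition U_c ::
  "('v \<Rightarrow> 'v \<Rightarrow> bool) \<Rightarrow> 'v set \<Rightarrow> 'v set \<Rightarrow> 'c set \<Rightarrow> 'c set \<Rightarrow> ('v \<times> 'v \<Rightarrow> 'c)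
     \<Rightarrow> ('c \<Rightarrow> 'c) set \<Rightarrow> ('c \<Rightarrow> 'c) set \<Rightarrow> ('v \<Rightarrow> 'v) set" where
  "U_c adj VX VY X Y c M N = {g. is_aut adj g \<and> g ` VX = VX \<and>
      (\<forall>v\<in>VX. local_action adj c X g v \<in> M) \<and> (\<forall>v\<in>VY. local_action adj c Y g v \<in> N)}"

definition in_colour :: "('v \<Rightarrow> 'v \<Rightarrow> bool) \<Rightarrow> ('v \<times> 'v \<Rightarrow> 'c) \<Rightarrow> 'v \<Rightarrow> 'c" where
  "in_colour adj c v = c (SOME a. a \<in> arcs_in adj v)"

end

theory Submission
  imports Defs
begin

text \<open>Let \<open>\<tau>\<close> be a map on colours that permutes \<open>X\<close> and \<open>Y\<close>, and let \<open>r, r'\<close> be vertices on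
the same side whose in-colours correspond under \<open>\<tau>\<close>. Then there is an automorphism \<open>g\<close> with
\<open>g r = r'\<close> recolouring every arc by \<open>\<tau>\<close>: the image of \<open>u\<close> is found by copying the unique reduced
walk from \<open>u\<close> to \<open>r\<close> arc by arc, starting at \<open>r'\<close> and taking at each step the arc whose colour is
the \<open>\<tau>\<close>-image of the original one. The local actions of \<open>g\<close> are the restrictions of \<open>\<tau>\<close> to \<open>X\<close>
and \<open>Y\<close>, so choosing \<open>\<tau>\<close> to be \<open>\<sigma>\<close> on the colours of incoming arcs and the identity on the other
colours puts \<open>g\<close> in \<open>U_c(M,N)\<close>. Conversely, for \<open>g\<close> in \<open>U_c(M,N)\<close> the local action at an
in-neighbour of \<open>v\<close> sends the in-colour of \<open>v\<close> to that of \<open>g v\<close>.\<close>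

fun no_backtrack :: "'a list \<Rightarrow> bool" where
  "no_backtrack (x # y # z # zs) \<longleftrightarrow> x \<noteq> z \<and> no_backtrack (y # z # zs)"
| "no_backtrack _ \<longleftrightarrow> True"

lemma no_backtrack_iff_nth:
  "no_backtrack xs \<longleftrightarrow> (\<forall>i. Suc (Suc i) < length xs \<longrightarrow> xs ! i \<noteq> xs ! Suc (Suc i))"
proof (induction xs rule: no_backtrack.induct)
  case (1 x y z zs)
  then show ?case by (auto simp: less_Suc_eq_0_disj all_conj_distrib)
qed auto

lemma no_backtrack_rev [simp]: "no_backtrack (rev xs) \<longleftrightarrow> no_backtrack xs"
proof -
  have "no_backtrack (rev xs)" if "no_backtrack xs" for xs :: "'a list"
    unfolding no_backtrack_iff_nth
  proof (intro allI impI)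
    fix i assume i: "Suc (Suc i) < length (rev xs)"
    with that have "xs ! (length xs - Suc (Suc (Suc i))) \<noteq> xs ! Suc (Suc (length xs - Suc (Suc (Suc i))))"
      unfolding no_backtrack_iff_nth by simp
    with i show "rev xs ! i \<noteq> rev xs ! Suc (Suc i)"
      by (simp add: rev_nth Suc_diff_Suc numeral_eq_Suc)
  qed
  from this[of xs] this[of "rev xs"] show ?thesis by auto
qed

lemma is_cycle_if_closed_walk:
  assumes "distinct zs" "length zs \<ge> 3" "successively adj (zs @ [hd zs])"
  shows "is_cycle adj zs"
  unfolding is_cycle_def
proof (intro conjI allI impI)
  fix i assume i: "i < length zs"
  have "adj ((zs @ [hd zs]) ! i) ((zs @ [hd zs]) ! Suc i)"
    using successively_nth[OF assms(3)] i by simp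
  moreover have "hd zs = zs ! 0" using assms(2) by (intro hd_conv_nth) auto
  ultimately show "adj (zs ! i) (zs ! ((i + 1) mod length zs))"
    using i by (cases "Suc i = length zs") (auto simp: nth_append)
qed (use assms in auto)

lemma no_backtrack_tl: "no_backtrack xs \<Longrightarrow> no_backtrack (tl xs)"
  unfolding no_backtrack_iff_nth by (simp add: nth_tl)

lemma no_backtrack_butlast: "no_backtrack xs \<Longrightarrow> no_backtrack (butlast xs)"
  unfolding no_backtrack_iff_nth by (simp add: nth_butlast)

lemma no_backtrack_append_Cons:
  assumes "no_backtrack (xs @ [a])" "no_backtrack (a # ys)"
    and "xs \<noteq> [] \<Longrightarrow> ys \<noteq> [] \<Longrightarrow> last xs \<noteq> hd ys"
  shows "no_backtrack (xs @ a # ys)"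
  using assms
proof (induction xs)
  case (Cons x xs)
  then have "no_backtrack (xs @ a # ys)"
    using no_backtrack_tl[of "x # xs @ [a]"] by (cases xs) auto
  with Cons.prems show ?case
    by (cases xs rule: remdups_adj.cases; cases ys) auto
qed simp

locale tree =
  fixes adj :: "'v \<Rightarrow> 'v \<Rightarrow> bool"
  assumes is_tree: "is_tree adj"
begin

lemma adj_sym: "adj u w \<Longrightarrow> adj w u"
  and adj_irrefl: "\<not> adj u u"
  and connected: "adj\<^sup>*\<^sup>* u w"
  and no_cycle: "\<not> is_cycle adj xs"
  using is_tree unfolding is_tree_def by blast+

definition reduced_walk :: "'v list \<Rightarrow> bool" where
  "reduced_walk xs \<longleftrightarrow> successively adj xs \<and> no_backtrack xs"

lemma reduced_walk_Cons_Cons: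
  "reduced_walk (w # u # xs) \<longleftrightarrow> adj w u \<and> reduced_walk (u # xs) \<and> (xs \<noteq> [] \<longrightarrow> w \<noteq> hd xs)"
  unfolding reduced_walk_def by (cases xs) auto

lemma reduced_walk_tl: "reduced_walk xs \<Longrightarrow> reduced_walk (tl xs)"
  unfolding reduced_walk_def using no_backtrack_tl[of xs] by (cases xs) (auto simp: successively_Cons)

lemma reduced_walk_butlast: "reduced_walk xs \<Longrightarrow> reduced_walk (butlast xs)"
  unfolding reduced_walk_def
  by (metis append_butlast_last_id butlast.simps(1) no_backtrack_butlast successively_append_iff)

lemma closed_reduced_walk_Nil:
  assumes walk: "reduced_walk (zs @ [hd zs])" and "distinct zs"
  shows "zs = []"
proof (cases "length zs \<ge> 3")
  case True
  then show ?thesis using assms no_cycle is_cycle_if_closed_walk unfolding reduced_walk_def by blast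
next
  case False
  then show ?thesis using walk adj_irrefl unfolding reduced_walk_def
    by (cases zs rule: remdups_adj.cases) (auto simp: Suc_le_eq)
qed

lemma reduced_walk_distinct: "reduced_walk xs \<Longrightarrow> distinct xs"
proof (induction xs rule: length_induct)
  case (1 xs)
  show ?case
  proof (rule ccontr)
    assume "\<not> distinct xs"
    then obtain a ys where xs: "xs = a # ys" by (cases xs) auto
    have "distinct ys" "distinct (butlast xs)"
      using "1.IH" reduced_walk_tl[OF "1.prems"] reduced_walk_butlast[OF "1.prems"] xs by auto
    with \<open>\<not> distinct xs\<close> obtain zs where "xs = zs @ [hd zs]" "distinct zs" "zs \<noteq> []"
      unfolding xs by (cases ys rule: rev_cases) auto
    then show False using closed_reduced_walk_Nil "1.prems" by blast
  qed
qed

lemma reduced_walk_last_neq_hd: "reduced_walk (a # xs) \<Longrightarrow> xs \<noteq> [] \<Longrightarrow> last xs \<noteq> a"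
  using reduced_walk_distinct[of "a # xs"] last_in_set[of xs] by auto

lemma reduced_walk_rev_append:
  assumes "reduced_walk (a # xs)" "reduced_walk (a # ys)" "xs \<noteq> []" "hd xs \<noteq> hd ys"
  shows "reduced_walk (rev xs @ a # ys)"
  unfolding reduced_walk_def
proof
  have "successively (\<lambda>x y. adj y x) (a # xs)"
    using assms(1) unfolding reduced_walk_def
    by (rule successively_mono[OF conjunct1]) (erule adj_sym)
  then have "successively adj (rev xs @ [a])" using successively_rev[of adj "a # xs"] by simp
  then show "successively adj (rev xs @ a # ys)"
    using assms(2) unfolding reduced_walk_def by (simp add: successively_append_iff)
  have "no_backtrack (rev xs @ [a])"
    using assms(1) no_backtrack_rev[of "a # xs"] unfolding reduced_walk_def by simp
  moreover have "no_backtrack (a # ys)" using assms(2) unfolding reduced_walk_def by simp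
  moreover have "last (rev xs) \<noteq> hd ys" using assms(3,4) by (simp add: last_rev)
  ultimately show "no_backtrack (rev xs @ a # ys)" by (rule no_backtrack_append_Cons)
qed

lemma reduced_walk_unique:
  assumes "reduced_walk P" "reduced_walk Q" "P \<noteq> []" "Q \<noteq> []" "hd P = hd Q" "last P = last Q"
  shows "P = Q"
  using assms
proof (induction P arbitrary: Q)
  case (Cons a P')
  then obtain Q' where Q: "Q = a # Q'" by (cases Q) auto
  have walks: "reduced_walk (a # P')" "reduced_walk (a # Q')" using Cons.prems Q by simp_all
  have "P' = [] \<longleftrightarrow> Q' = []"
    using reduced_walk_last_neq_hd[OF walks(1)] reduced_walk_last_neq_hd[OF walks(2)] Cons.prems(6) Q
    by (cases "P' = []"; cases "Q' = []") auto
  moreover have "P' = Q'" if "P' \<noteq> []" "Q' \<noteq> []"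
  proof (cases "hd P' = hd Q'")
    case True
    moreover have "last P' = last Q'" using Cons.prems(6) Q that by simp
    ultimately show ?thesis
      using Cons.IH reduced_walk_tl[OF walks(1)] reduced_walk_tl[OF walks(2)] that by simp
  next
    case False
    have "distinct (rev Q' @ a # P')"
      using reduced_walk_distinct reduced_walk_rev_append[OF walks(2,1) that(2)] False by metis
    moreover have "last Q' = last P'" using Cons.prems(6) Q that by simp
    ultimately show ?thesis using that last_in_set by (fastforce simp: disjoint_iff)
  qed
  ultimately show ?case using Q by blast
qed simp

lemma ex_reduced_walk: "\<exists>P. reduced_walk P \<and> P \<noteq> [] \<and> hd P = u \<and> last P = v"
  using connected[of u v]
proof (induction rule: converse_rtranclp_induct)
  case base
  show ?case by (rule exI[of _ "[v]"]) (simp add: reduced_walk_def)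
next
  case (step x y)
  then obtain P where P: "reduced_walk P" "P \<noteq> []" "hd P = y" "last P = v" by blast
  then obtain P' where P': "P = y # P'" by (cases P) auto
  show ?case
  proof (cases "P' \<noteq> [] \<and> hd P' = x")
    case True
    then show ?thesis using P P' reduced_walk_tl[of P] by (intro exI[of _ P']) auto
  next
    case False
    then have "reduced_walk (x # P)" using P P' step(1) by (auto simp: reduced_walk_Cons_Cons)
    then show ?thesis using P by (intro exI[of _ "x # P"]) auto
  qed
qed

definition geodesic :: "'v \<Rightarrow> 'v \<Rightarrow> 'v list" where
  "geodesic u v = (SOME P. reduced_walk P \<and> P \<noteq> [] \<and> hd P = u \<and> last P = v)"

lemma geodesic:
  "reduced_walk (geodesic u v)" "geodesic u v \<noteq> []" "hd (geodesic u v) = u" "last (geodesic u v) = v"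
  using someI_ex[OF ex_reduced_walk[of u v]] unfolding geodesic_def by blast+

lemma geodesic_eq: "reduced_walk P \<Longrightarrow> P \<noteq> [] \<Longrightarrow> hd P = u \<Longrightarrow> last P = v \<Longrightarrow> geodesic u v = P"
  using reduced_walk_unique[of "geodesic u v" P] geodesic[of u v] by auto

end

locale coloured_tree =
  fixes adj :: "'v \<Rightarrow> 'v \<Rightarrow> bool" and VX VY :: "'v set"
    and X Y :: "'c set" and c :: "'v \<times> 'v \<Rightarrow> 'c"
  assumes bipartition: "biregular_tree_bip adj VX VY"
    and legal: "legal_colouring adj VX VY X Y c"
    and colours_disjoint: "X \<inter> Y = {}"
    and colours_nonempty: "X \<noteq> {}" "Y \<noteq> {}"

sublocale coloured_tree \<subseteq> tree
  using bipartition unfolding biregular_tree_bip_def by unfold_locales blast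

context coloured_tree
begin

lemma VY_eq: "VY = - VX"
  using bipartition unfolding biregular_tree_bip_def by blast

lemma adj_side: "adj u w \<Longrightarrow> u \<in> VX \<longleftrightarrow> w \<notin> VX"
  using bipartition VY_eq unfolding biregular_tree_bip_def by blast

definition colours :: "'v \<Rightarrow> 'c set" where
  "colours u = (if u \<in> VX then X else Y)"

lemma bij_betw_arcs_out: "bij_betw c (arcs_out adj u) (colours u)"
  using legal VY_eq unfolding legal_colouring_def colours_def by auto

lemma arc_colour_inj: "adj u w \<Longrightarrow> adj u w' \<Longrightarrow> c (u, w) = c (u, w') \<Longrightarrow> w = w'"
  using bij_betw_arcs_out[of u] unfolding bij_betw_def inj_on_def arcs_out_def by blast

lemma arc_colour_mem: "adj u w \<Longrightarrow> c (u, w) \<in> colours u"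
  using bij_betw_arcs_out[of u] unfolding bij_betw_def arcs_out_def by blast

definition neighbour :: "'v \<Rightarrow> 'c \<Rightarrow> 'v" where
  "neighbour u a = snd (inv_into (arcs_out adj u) c a)"

lemma
  assumes "a \<in> colours u"
  shows adj_neighbour: "adj u (neighbour u a)"
    and colour_neighbour: "c (u, neighbour u a) = a"
proof -
  have a: "a \<in> c ` arcs_out adj u" using bij_betw_arcs_out[of u] assms unfolding bij_betw_def by blast
  then obtain w where w: "inv_into (arcs_out adj u) c a = (u, w)" "adj u w"
    using inv_into_into[OF a] unfolding arcs_out_def by blast
  then show "adj u (neighbour u a)" unfolding neighbour_def by simp
  show "c (u, neighbour u a) = a" using f_inv_into_f[OF a] w unfolding neighbour_def by simp
qed

lemma ex_in_neighbour: "\<exists>w. adj w u"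
proof -
  obtain a where "a \<in> colours u" using colours_nonempty unfolding colours_def by (cases "u \<in> VX") auto
  then show ?thesis using adj_neighbour adj_sym by blast
qed

lemma in_colour_eq: "adj w u \<Longrightarrow> in_colour adj c u = c (w, u)"
proof -
  assume "adj w u"
  then have "(w, u) \<in> arcs_in adj u" unfolding arcs_in_def by blast
  with someI[of "\<lambda>a. a \<in> arcs_in adj u"] show ?thesis
    using legal unfolding legal_colouring_def in_colour_def by blast
qed

lemma in_colour_mem: "in_colour adj c u \<in> (if u \<in> VX then Y else X)"
proof -
  obtain w where "adj w u" using ex_in_neighbour by blast
  then show ?thesis using in_colour_eq arc_colour_mem adj_side unfolding colours_def by fastforce
qed

definition twisted_hom :: "('c \<Rightarrow> 'c) \<Rightarrow> ('v \<Rightarrow> 'v) \<Rightarrow> bool" where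
  "twisted_hom \<tau> g \<longleftrightarrow> (\<forall>u w. adj u w \<longrightarrow> adj (g u) (g w) \<and> c (g u, g w) = \<tau> (c (u, w)))"

lemma twisted_hom_id_fixing_eq_id:
  assumes "twisted_hom id f" "f s = s"
  shows "f u = u"
  using connected[of s u]
proof (induction rule: rtranclp_induct)
  case (step y z)
  have "adj (f y) (f z) \<and> c (f y, f z) = c (y, z)"
    using assms(1) step(2) unfolding twisted_hom_def by simp
  with step.IH show ?case using arc_colour_inj[OF _ step(2)] by simp
qed (use assms(2) in simp)

lemma twisted_hom_comp: "twisted_hom \<tau> g \<Longrightarrow> twisted_hom \<rho> h \<Longrightarrow> twisted_hom (\<rho> \<circ> \<tau>) (h \<circ> g)"
  unfolding twisted_hom_def by simp

lemma twisted_hom_cong: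
  assumes "\<And>a. a \<in> X \<union> Y \<Longrightarrow> \<tau> a = \<tau>' a"
  shows "twisted_hom \<tau> g \<longleftrightarrow> twisted_hom \<tau>' g"
proof -
  have "c (u, w) \<in> X \<union> Y" if "adj u w" for u w
    using arc_colour_mem[OF that] unfolding colours_def by (auto split: if_splits)
  then show ?thesis using assms unfolding twisted_hom_def by metis
qed

lemma is_aut_if_twisted_homs_inverse:
  assumes "twisted_hom \<tau> g" "twisted_hom \<rho> h" "\<And>u. h (g u) = u" "\<And>u. g (h u) = u"
  shows "is_aut adj g"
  unfolding is_aut_def
proof
  show "bij g" using assms(3,4) by (metis bijI injI surjI)
  show "\<forall>u w. adj u w \<longleftrightarrow> adj (g u) (g w)"
    using assms(1-3) unfolding twisted_hom_def by metis
qed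

lemma local_action_arc:
  assumes "adj u w"
  shows "local_action adj c (colours u) g u (c (u, w)) = c (g u, g w)"
proof -
  have "inv_into (arcs_out adj u) c (c (u, w)) = (u, w)"
    using bij_betw_arcs_out[of u] assms unfolding bij_betw_def arcs_out_def by (auto intro: inv_into_f_f)
  then show ?thesis using arc_colour_mem[OF assms] unfolding local_action_def by simp
qed

lemma local_action_eq_restrict:
  assumes "\<And>w. adj u w \<Longrightarrow> c (g u, g w) = \<tau> (c (u, w))"
  shows "local_action adj c (colours u) g u = restrict \<tau> (colours u)"
proof
  fix a
  show "local_action adj c (colours u) g u a = restrict \<tau> (colours u) a"
  proof (cases "a \<in> colours u")
    case True
    then obtain w where "adj u w" "a = c (u, w)"
      using bij_betw_arcs_out[of u] unfolding bij_betw_def arcs_out_def by auto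
    then show ?thesis using local_action_arc assms True by simp
  qed (simp add: local_action_def)
qed

end

locale colour_twist = coloured_tree adj VX VY X Y c
  for adj :: "'v \<Rightarrow> 'v \<Rightarrow> bool" and VX VY X Y and c :: "'v \<times> 'v \<Rightarrow> 'c" +
  fixes \<tau> :: "'c \<Rightarrow> 'c" and r r' :: 'v
  assumes twist_X: "\<tau> ` X \<subseteq> X" and twist_Y: "\<tau> ` Y \<subseteq> Y"
    and base_side: "r' \<in> VX \<longleftrightarrow> r \<in> VX"
    and base_in_colour: "in_colour adj c r' = \<tau> (in_colour adj c r)"
begin

lemma twist_colours: "a \<in> colours u \<Longrightarrow> \<tau> a \<in> colours u"
  using twist_X twist_Y unfolding colours_def by (auto split: if_splits)

fun follow :: "'v list \<Rightarrow> 'v" where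
  "follow [] = r'"
| "follow [_] = r'"
| "follow (w # u # xs) = neighbour (follow (u # xs)) (\<tau> (c (u, w)))"

lemma follow_side_in_colour:
  assumes "successively adj xs" "xs \<noteq> []" "last xs = r"
  shows "(follow xs \<in> VX \<longleftrightarrow> hd xs \<in> VX) \<and> in_colour adj c (follow xs) = \<tau> (in_colour adj c (hd xs))"
  using assms
proof (induction xs rule: follow.induct)
  case (3 w u xs)
  let ?a = "\<tau> (c (u, w))" and ?y = "follow (u # xs)"
  have wu: "adj w u" and IH: "?y \<in> VX \<longleftrightarrow> u \<in> VX" "in_colour adj c ?y = \<tau> (in_colour adj c u)"
    using "3.IH" "3.prems" by auto
  have "?a \<in> colours ?y"
    using twist_colours[OF arc_colour_mem[OF adj_sym[OF wu]]] IH(1) unfolding colours_def by simp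
  then have "adj ?y (neighbour ?y ?a)" "in_colour adj c (neighbour ?y ?a) = ?a"
    using in_colour_eq[OF adj_neighbour] colour_neighbour by (auto intro: adj_neighbour)
  then show ?case
    using IH(1) adj_side[of ?y] adj_side[OF wu] in_colour_eq[OF adj_sym[OF wu]] by auto
qed (use base_side base_in_colour in auto)

definition twist_map :: "'v \<Rightarrow> 'v" where
  "twist_map u = follow (geodesic u r)"

lemma twist_map_side: "twist_map u \<in> VX \<longleftrightarrow> u \<in> VX"
  and twist_map_in_colour: "in_colour adj c (twist_map u) = \<tau> (in_colour adj c u)"
  using follow_side_in_colour[of "geodesic u r"] geodesic[of u r]
  unfolding twist_map_def reduced_walk_def by auto

lemma twist_map_base: "twist_map r = r'"
  using geodesic_eq[of "[r]" r r] unfolding twist_map_def reduced_walk_def by simp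

lemma twisted_hom_twist_map: "twisted_hom \<tau> twist_map"
  unfolding twisted_hom_def
proof (intro allI impI)
  fix u w assume uw: "adj u w"
  obtain P where P: "geodesic u r = u # P" using geodesic(2,3)[of u r] by (cases "geodesic u r") auto
  show "adj (twist_map u) (twist_map w) \<and> c (twist_map u, twist_map w) = \<tau> (c (u, w))"
  proof (cases "P \<noteq> [] \<and> hd P = w")
    case True
    then have "geodesic w r = P"
      using geodesic[of u r] P reduced_walk_tl[of "u # P"] by (intro geodesic_eq) auto
    then have "twist_map u = neighbour (twist_map w) (\<tau> (c (w, u)))"
      using True P unfolding twist_map_def by (cases P) auto
    moreover have "\<tau> (c (w, u)) \<in> colours (twist_map w)"
      using twist_colours[OF arc_colour_mem[OF adj_sym[OF uw]]] twist_map_side[of w]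
      unfolding colours_def by simp
    ultimately have "adj (twist_map w) (twist_map u)" using adj_neighbour by simp
    moreover from this have "c (twist_map u, twist_map w) = \<tau> (c (u, w))"
      using in_colour_eq[OF adj_sym] twist_map_in_colour[of w] in_colour_eq[OF uw] by metis
    ultimately show ?thesis using adj_sym by blast
  next
    case False
    then have "geodesic w r = w # u # P"
      using geodesic[of u r] P uw adj_sym
      by (intro geodesic_eq) (auto simp: reduced_walk_Cons_Cons)
    then have "twist_map w = neighbour (twist_map u) (\<tau> (c (u, w)))"
      using P unfolding twist_map_def by simp
    moreover have "\<tau> (c (u, w)) \<in> colours (twist_map u)"
      using twist_colours[OF arc_colour_mem[OF uw]] twist_map_side[of u] unfolding colours_def by simp
    ultimately show ?thesis using adj_neighbour colour_neighbour by simp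
  qed
qed

end

context coloured_tree
begin

lemma ex_twisted_hom:
  assumes "\<tau> ` X \<subseteq> X" "\<tau> ` Y \<subseteq> Y" "r' \<in> VX \<longleftrightarrow> r \<in> VX"
    and "in_colour adj c r' = \<tau> (in_colour adj c r)"
  shows "\<exists>g. twisted_hom \<tau> g \<and> g r = r' \<and> (\<forall>u. g u \<in> VX \<longleftrightarrow> u \<in> VX)"
proof -
  interpret colour_twist adj VX VY X Y c \<tau> r r'
    by unfold_locales (fact assms)+
  show ?thesis using twisted_hom_twist_map twist_map_base twist_map_side by blast
qed

lemma ex_twisted_automorphism:
  assumes \<tau>: "bij_betw \<tau> X X" "bij_betw \<tau> Y Y"
    and base: "r' \<in> VX \<longleftrightarrow> r \<in> VX" "in_colour adj c r' = \<tau> (in_colour adj c r)"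
  shows "\<exists>g. is_aut adj g \<and> twisted_hom \<tau> g \<and> g r = r' \<and> g ` VX = VX"
proof -
  define \<rho> where "\<rho> a = (if a \<in> X then inv_into X \<tau> a else inv_into Y \<tau> a)" for a
  have \<rho>: "\<rho> ` X \<subseteq> X" "\<rho> ` Y \<subseteq> Y"
    using \<tau> colours_disjoint unfolding \<rho>_def by (auto simp: bij_betw_def inv_into_into)
  have \<rho>_\<tau>: "(\<rho> \<circ> \<tau>) a = id a" and \<tau>_\<rho>: "(\<tau> \<circ> \<rho>) a = id a" if "a \<in> X \<union> Y" for a
    using that \<tau> colours_disjoint unfolding \<rho>_def
    by (auto simp: bij_betw_def f_inv_into_f inv_into_f_f)
  obtain g where g: "twisted_hom \<tau> g" "g r = r'" "\<And>u. g u \<in> VX \<longleftrightarrow> u \<in> VX"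
    using ex_twisted_hom[of \<tau> r' r] base bij_betw_imp_surj_on[OF \<tau>(1)] bij_betw_imp_surj_on[OF \<tau>(2)]
    by auto
  have "in_colour adj c r = \<rho> (in_colour adj c r')"
    using base(2) \<rho>_\<tau> in_colour_mem[of r] by (auto split: if_splits)
  then obtain h where h: "twisted_hom \<rho> h" "h r' = r"
    using ex_twisted_hom[OF \<rho>, of r r'] base(1) by blast
  have "twisted_hom id (h \<circ> g)" "twisted_hom id (g \<circ> h)"
    using twisted_hom_comp g(1) h(1) twisted_hom_cong \<rho>_\<tau> \<tau>_\<rho> by metis+
  then have hg: "h (g u) = u" and gh: "g (h u) = u" for u
    using twisted_hom_id_fixing_eq_id[of "h \<circ> g" r] twisted_hom_id_fixing_eq_id[of "g \<circ> h" r'] g(2) h(2)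
    by auto
  have "g ` VX = VX" using g(3) gh by (metis image_eqI subsetI subset_antisym image_subsetI)
  then show ?thesis using is_aut_if_twisted_homs_inverse[OF g(1) h(1) hg gh] g by blast
qed

lemma twisted_automorphism_mem_U_c:
  assumes "is_aut adj g" "twisted_hom \<tau> g" "g ` VX = VX"
    and "restrict \<tau> X \<in> M" "restrict \<tau> Y \<in> N"
  shows "g \<in> U_c adj VX VY X Y c M N"
proof -
  have local: "local_action adj c (colours u) g u = restrict \<tau> (colours u)" for u
    using assms(2) by (intro local_action_eq_restrict) (simp add: twisted_hom_def)
  have "local_action adj c X g u = restrict \<tau> X" if "u \<in> VX" for u
    using local[of u] that unfolding colours_def by simp
  moreover have "local_action adj c Y g u = restrict \<tau> Y" if "u \<in> VY" for u
    using local[of u] that VY_eq unfolding colours_def by simp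
  ultimately show ?thesis using assms unfolding U_c_def by auto
qed

lemma U_c_orbit_imp_in_colour_orbit:
  assumes "g \<in> U_c adj VX VY X Y c M N"
  shows "\<exists>\<sigma>\<in>(if v \<in> VX then N else M). \<sigma> (in_colour adj c v) = in_colour adj c (g v)"
proof -
  obtain w where w: "adj w v" using ex_in_neighbour by blast
  have "local_action adj c (colours w) g w \<in> (if v \<in> VX then N else M)"
    using assms adj_side[OF w] VY_eq unfolding U_c_def colours_def by auto
  moreover have "adj (g w) (g v)" using assms w unfolding U_c_def is_aut_def by blast
  ultimately show ?thesis using local_action_arc[OF w] in_colour_eq w by metis
qed

lemma in_colour_orbit_imp_U_c_orbit:
  assumes M: "subgroup M (BijGroup X)" and N: "subgroup N (BijGroup Y)"
    and side: "v' \<in> VX \<longleftrightarrow> v \<in> VX"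
    and \<sigma>: "\<sigma> \<in> (if v \<in> VX then N else M)" "\<sigma> (in_colour adj c v) = in_colour adj c v'"
  shows "\<exists>g\<in>U_c adj VX VY X Y c M N. g v = v'"
proof -
  define S where "S = (if v \<in> VX then Y else X)"
  define \<tau> where "\<tau> a = (if a \<in> S then \<sigma> a else a)" for a
  have "\<sigma> \<in> Bij S"
    using \<sigma>(1) subgroup.subset[OF M] subgroup.subset[OF N] unfolding S_def
    by (auto simp: BijGroup_def split: if_splits)
  then have "restrict \<tau> S = \<sigma>" "bij_betw \<tau> S S"
    unfolding \<tau>_def Bij_def by (auto simp: extensional_restrict cong: bij_betw_cong restrict_cong)
  have off_S: "restrict \<tau> A = (\<lambda>a\<in>A. a)" "bij_betw \<tau> A A" if "A \<inter> S = {}" for A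
  proof -
    have "\<tau> a = a" if "a \<in> A" for a using \<open>A \<inter> S = {}\<close> that unfolding \<tau>_def by auto
    then show "restrict \<tau> A = (\<lambda>a\<in>A. a)" "bij_betw \<tau> A A"
      using bij_betw_cong[of A \<tau> id A] by auto
  qed
  have "(\<lambda>a\<in>X. a) \<in> M" "(\<lambda>a\<in>Y. a) \<in> N"
    using subgroup.one_closed[OF M] subgroup.one_closed[OF N] by (simp_all add: BijGroup_def)
  then have perms: "bij_betw \<tau> X X" "bij_betw \<tau> Y Y" "restrict \<tau> X \<in> M" "restrict \<tau> Y \<in> N"
    using \<open>restrict \<tau> S = \<sigma>\<close> \<open>bij_betw \<tau> S S\<close> \<sigma>(1) off_S colours_disjoint
    unfolding S_def by (auto split: if_splits simp: Int_commute)
  have "in_colour adj c v' = \<tau> (in_colour adj c v)"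
    using \<sigma>(2) in_colour_mem[of v] unfolding \<tau>_def S_def by simp
  then obtain g where "is_aut adj g" "twisted_hom \<tau> g" "g v = v'" "g ` VX = VX"
    using ex_twisted_automorphism[OF perms(1,2) side] by blast
  then show ?thesis using twisted_automorphism_mem_U_c perms(3,4) by blast
qed

lemma U_c_orbit_iff:
  assumes "subgroup M (BijGroup X)" "subgroup N (BijGroup Y)" "v' \<in> VX \<longleftrightarrow> v \<in> VX"
  shows "(\<exists>g\<in>U_c adj VX VY X Y c M N. g v = v') \<longleftrightarrow>
    (\<exists>\<sigma>\<in>(if v \<in> VX then N else M). \<sigma> (in_colour adj c v) = in_colour adj c v')"
  using U_c_orbit_imp_in_colour_orbit in_colour_orbit_imp_U_c_orbit[OF assms] by blast

end

theorem proposition3p4: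
  fixes adj :: "'v \<Rightarrow> 'v \<Rightarrow> bool"
    and VX VY :: "'v set"
    and X Y :: "'c set"
    and c :: "'v \<times> 'v \<Rightarrow> 'c"
    and M N :: "('c \<Rightarrow> 'c) set"
  assumes "X \<inter> Y = {}"
    and "\<exists>a b. a \<in> X \<and> b \<in> X \<and> a \<noteq> b"
    and "\<exists>a b. a \<in> Y \<and> b \<in> Y \<and> a \<noteq> b"
    and "subgroup M (BijGroup X)" and "M \<noteq> {\<one>\<^bsub>BijGroup X\<^esub>}"
    and "subgroup N (BijGroup Y)" and "N \<noteq> {\<one>\<^bsub>BijGroup Y\<^esub>}"
    and "biregular_tree_bip adj VX VY"
    and "legal_colouring adj VX VY X Y c"
  shows "(\<forall>v\<in>VX. \<forall>v'\<in>VX. (\<exists>g\<in>U_c adj VX VY X Y c M N. g v = v') \<longleftrightarrow>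
                (\<exists>\<sigma>\<in>N. \<sigma> (in_colour adj c v) = in_colour adj c v'))
       \<and> (\<forall>v\<in>VY. \<forall>v'\<in>VY. (\<exists>g\<in>U_c adj VX VY X Y c M N. g v = v') \<longleftrightarrow>
                (\<exists>\<sigma>\<in>M. \<sigma> (in_colour adj c v) = in_colour adj c v'))"
proof -
  interpret coloured_tree adj VX VY X Y c
    using assms(1-3,8,9) by unfold_locales auto
  show ?thesis
    using U_c_orbit_iff[OF assms(4,6)] VY_eq by auto
qed

end
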